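(* Let $N\in\mathbb N$, $\mathbb S\subset\mathbb R^n$ measurable, $\mathbf s_0\in\mathbb S$, $S\in[0,1]$, and $\gamma_1,\ldots,\gamma_{N-1}\in(0,1]$. For each $k\in\{0,\ldots,N-1\}$ let $\boldsymbol\pi^k=\{\boldsymbol\pi^k_k,\ldots,\boldsymbol\pi^k_{N-1}\}$ be a shrinking-horizon policy sequence. Assume $$\mathbb P[\mathbf s_{1,\ldots,N}\in\mathbb S\mid \mathbf s_0,\boldsymbol\pi^0]\ge S_0\ge S$$ and that for every $k\in\{1,\ldots,N-1\}$ and every state $\mathbf s_k\in\mathbb S$, $$\mathbb P[\mathbf s_{k+1,\ldots,N}\in\mathbb S\mid \mathbf s_k,\boldsymbol\pi^k]\ge S_k,\qquad S_k:=\gamma_k\,\mathbb P[\mathbf s_{k+1,\ldots,N}\in\mathbb S\mid \mathbf s_k,\boldsymbol\pi^{k-1}],$$ where in the right-hand side $\boldsymbol\pi^{k-1}$ is used through its components $\boldsymbol\pi^{k-1}_k,\ldots,\boldsymbol\pi^{k-1}_{N-1}$. Then the closed-loop policy sequence $\{\boldsymbol\pi^0_0,\boldsymbol\pi^1_1,\ldots,\boldsymbol\pi^{N-1}_{N-1}\}$ (i.e. $\mathbf u_k=\boldsymbol\pi^k_k(\mathbf s_k)$ for $k=0,\ldots,N-1$) satisfies $$\mathbb P\big[\mathbf s_{1,\ldots,N}\in\mathbb S\mid \mathbf s_0,\{\boldsymbol\pi^0_0,\ldots,\boldsymbol\pi^{N-1}_{N-1}\}\big]\ge \Big(\prod_{k=1}^{N-1}\gamma_k\Big)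 S_0 .$$
   Context: States $\mathbf s_k\in\mathbb R^n$ evolve as a controlled Markov chain with transition probability density $\rho[\mathbf s_+\mid\mathbf s,\mathbf u]$; a policy applied at time $t$ is a measurable map $\mathbf s\mapsto\mathbf u$. The notation $\mathbf s_{a,\ldots,b}\in\mathbb S$ means $\mathbf s_j\in\mathbb S$ for all $j=a,\ldots,b$. For a policy sequence $\boldsymbol\pi$ defined at times $0,\ldots,N-1$, $\mathbb P[\mathbf s_{1,\ldots,N}\in\mathbb S\mid\mathbf s_0,\boldsymbol\pi]$ is the mission-wide probability of safety (MWPS). For a policy sequence with components at times $k,\ldots,N-1$, $\mathbb P[\mathbf s_{k+1,\ldots,N}\in\mathbb S\mid\mathbf s_k,\cdot]$ is the remaining MWPS: the probability that the chain started at $\mathbf s_k$ at time $k$ and driven by those components stays in $\mathbb S$ at times $k+1,\ldots,N$. *)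

theory Defs
  imports "HOL-Analysis.Analysis"
begin

(* Remaining mission-wide probability of safety.
   rho s' s u : transition density rho[s' | s, u] w.r.t. Lebesgue measure.
   p j        : policy applied at time j (a policy sequence indexed by absolute time).
   rmwps_aux rho S N p m s : probability that the chain, started in s at time N - m
   and driven by p (N-m), ..., p (N-1), stays in S at times N-m+1, ..., N. *)
primrec rmwps_aux ::
  "('s::euclidean_space \<Rightarrow> 's \<Rightarrow> 'u \<Rightarrow> real) \<Rightarrow> 's set \<Rightarrow> nat \<Rightarrow> (nat \<Rightarrow> 's \<Rightarrow> 'u)
     \<Rightarrow> nat \<Rightarrow> 's \<Rightarrow> ennreal" where
  "rmwps_aux rho S N p 0 s = 1"
| "rmwps_aux rho S N p (Suc m) s =
     (\<integral>\<^sup>+ s'. indicator S s' * ennreal (rho s' s (p (N - Suc m) s)) * rmwps_aux rho S N p m s' \<partial>lborel)"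

definition rmwps ::
  "('s::euclidean_space \<Rightarrow> 's \<Rightarrow> 'u \<Rightarrow> real) \<Rightarrow> 's set \<Rightarrow> nat \<Rightarrow> (nat \<Rightarrow> 's \<Rightarrow> 'u)
     \<Rightarrow> nat \<Rightarrow> 's \<Rightarrow> ennreal" where
  "rmwps rho S N p k s = rmwps_aux rho S N p (N - k) s"

end

theory Submission
  imports Defs
begin

text \<open>Backward induction on the time index k. Write \<open>\<sigma>\<close> for the closed-loop sequence
  \<open>j \<mapsto> \<pi>\<^sup>j\<^sub>j\<close> and \<open>\<Gamma>\<^sub>k = \<gamma>\<^sub>k\<^sub>+\<^sub>1 \<cdots> \<gamma>\<^sub>N\<^sub>-\<^sub>1\<close>. The claim is
  \<open>\<Gamma>\<^sub>k \<cdot> P[safe from k | \<pi>\<^sup>k] \<le> P[safe from k | \<sigma>]\<close> on the safe set. At time k both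
  sequences apply the same control \<open>\<pi>\<^sup>k\<^sub>k\<close>, so it suffices to compare the remaining
  probabilities from time k + 1 on, pointwise in the safe set: there the hypothesis
  \<open>\<gamma>\<^sub>k\<^sub>+\<^sub>1 P[\<cdot> | \<pi>\<^sup>k] \<le> P[\<cdot> | \<pi>\<^sup>k\<^sup>+\<^sup>1]\<close> and the induction hypothesis chain together.
  At k = 0 this is the theorem.\<close>

text \<open>No measurability of the integrand is needed for this direction of \<open>nn_integral_cmult\<close>.\<close>
lemma nn_integral_cmult_le:
  fixes c :: ennreal
  shows "c * integral\<^sup>N M f \<le> (\<integral>\<^sup>+ x. c * f x \<partial>M)"
proof -
  have "c * integral\<^sup>N M f = (SUP g\<in>{g. simple_function M g \<and> g \<le> f}. c * integral\<^sup>S M g)"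
    unfolding nn_integral_def by (simp add: SUP_mult_left_ennreal)
  also have "\<dots> \<le> (\<integral>\<^sup>+ x. c * f x \<partial>M)"
  proof (rule SUP_least)
    fix g assume "g \<in> {g. simple_function M g \<and> g \<le> f}"
    then have g: "simple_function M g" "g \<le> f" by auto
    have "c * integral\<^sup>S M g = (\<integral>\<^sup>S x. c * g x \<partial>M)"
      using g(1) by simp
    also have "\<dots> \<le> (\<integral>\<^sup>+ x. c * f x \<partial>M)"
      unfolding nn_integral_def
    proof (rule SUP_upper)
      have "simple_function M (\<lambda>x. c * g x)"
        using g(1) by (rule simple_function_compose1)
      moreover have "(\<lambda>x. c * g x) \<le> (\<lambda>x. c * f x)"
        using g(2) by (auto simp: le_fun_def intro: mult_left_mono)
      ultimately show "(\<lambda>x. c * g x) \<in> {g. simple_function M g \<and> g \<le> (\<lambda>x. c * f x)}"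
        by simp
    qed
    finally show "c * integral\<^sup>S M g \<le> (\<integral>\<^sup>+ x. c * f x \<partial>M)" .
  qed
  finally show ?thesis .
qed

lemma rmwps_at_horizon [simp]: "rmwps rho S N p N s = 1"
  by (simp add: rmwps_def)

lemma rmwps_step:
  assumes "k < N"
  shows "rmwps rho S N p k s =
    (\<integral>\<^sup>+ s'. indicator S s' * ennreal (rho s' s (p k s)) * rmwps rho S N p (Suc k) s' \<partial>lborel)"
proof -
  have "N - k = Suc (N - Suc k)" and "N - Suc (N - Suc k) = k"
    using assms by simp_all
  then show ?thesis
    unfolding rmwps_def by simp
qed

lemma rmwps_cong:
  assumes "k \<le> N" and "\<And>j. k \<le> j \<Longrightarrow> j < N \<Longrightarrow> p j = q j"
  shows "rmwps rho S N p k s = rmwps rho S N q k s"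
  using assms
proof (induction k arbitrary: s rule: inc_induct)
  case base
  show ?case by simp
next
  case (step k)
  then show ?case
    by (simp add: rmwps_step)
qed

lemma rmwps_scaled_mono_step:
  assumes "k < N" and "p k = q k"
    and "\<And>s'. s' \<in> S \<Longrightarrow> c * rmwps rho S N p (Suc k) s' \<le> rmwps rho S N q (Suc k) s'"
  shows "c * rmwps rho S N p k s \<le> rmwps rho S N q k s"
proof -
  have "c * rmwps rho S N p k s \<le>
      (\<integral>\<^sup>+ s'. c * (indicator S s' * ennreal (rho s' s (p k s)) * rmwps rho S N p (Suc k) s') \<partial>lborel)"
    unfolding rmwps_step[OF assms(1)] by (rule nn_integral_cmult_le)
  also have "\<dots> \<le>
      (\<integral>\<^sup>+ s'. indicator S s' * ennreal (rho s' s (q k s)) * rmwps rho S N q (Suc k) s' \<partial>lborel)"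
  proof (rule nn_integral_mono)
    fix s'
    show "c * (indicator S s' * ennreal (rho s' s (p k s)) * rmwps rho S N p (Suc k) s')
        \<le> indicator S s' * ennreal (rho s' s (q k s)) * rmwps rho S N q (Suc k) s'"
      using mult_left_mono[OF assms(3), of s' "ennreal (rho s' s (q k s))"] assms(2)
      by (cases "s' \<in> S") (simp_all add: ac_simps)
  qed
  also have "\<dots> = rmwps rho S N q k s"
    unfolding rmwps_step[OF assms(1)] ..
  finally show ?thesis .
qed

lemma rmwps_closed_loop_ge:
  fixes \<gamma> :: "nat \<Rightarrow> real"
  assumes "k \<le> N" and "s \<in> S"
    and gamma_nonneg: "\<And>j. j \<in> {1..<N} \<Longrightarrow> 0 \<le> \<gamma> j"
    and recur: "\<And>j s. j \<in> {1..<N} \<Longrightarrow> s \<in> S \<Longrightarrow>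
       ennreal (\<gamma> j) * rmwps rho S N (\<pi> (j - 1)) j s \<le> rmwps rho S N (\<pi> j) j s"
  shows "ennreal (\<Prod>j=Suc k..<N. \<gamma> j) * rmwps rho S N (\<pi> k) k s
      \<le> rmwps rho S N (\<lambda>j. \<pi> j j) k s"
  using assms(1,2)
proof (induction k arbitrary: s rule: inc_induct)
  case base
  show ?case by simp
next
  case (step k)
  have tail: "ennreal (\<Prod>j=Suc k..<N. \<gamma> j) * rmwps rho S N (\<pi> k) (Suc k) s'
      \<le> rmwps rho S N (\<lambda>j. \<pi> j j) (Suc k) s'" if "s' \<in> S" for s'
  proof (cases "Suc k = N")
    case True
    then show ?thesis by simp
  next
    case False
    then have k1: "Suc k \<in> {1..<N}"
      using step.hyps by simp
    have prod_split: "(\<Prod>j=Suc k..<N. \<gamma> j) = (\<Prod>j=Suc (Suc k)..<N. \<gamma> j) * \<gamma> (Suc k)"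
      using k1 by (simp add: prod.atLeast_Suc_lessThan mult.commute)
    have "ennreal (\<Prod>j=Suc k..<N. \<gamma> j) * rmwps rho S N (\<pi> k) (Suc k) s'
        = ennreal (\<Prod>j=Suc (Suc k)..<N. \<gamma> j)
          * (ennreal (\<gamma> (Suc k)) * rmwps rho S N (\<pi> k) (Suc k) s')"
    proof -
      have "0 \<le> (\<Prod>j=Suc (Suc k)..<N. \<gamma> j)"
        using gamma_nonneg by (intro prod_nonneg) simp
      moreover have "0 \<le> \<gamma> (Suc k)"
        using gamma_nonneg k1 by blast
      ultimately show ?thesis
        by (simp add: prod_split ennreal_mult mult.assoc)
    qed
    also have "\<dots> \<le> ennreal (\<Prod>j=Suc (Suc k)..<N. \<gamma> j) * rmwps rho S N (\<pi> (Suc k)) (Suc k) s'"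
      using recur[OF k1 that] by (simp add: mult_left_mono)
    also have "\<dots> \<le> rmwps rho S N (\<lambda>j. \<pi> j j) (Suc k) s'"
      using step.IH[OF that] .
    finally show ?thesis .
  qed
  show ?case
    by (rule rmwps_scaled_mono_step[OF step.hyps(2) refl tail])
qed

theorem proposition1:
  fixes rho :: "real^'n \<Rightarrow> real^'n \<Rightarrow> 'u::topological_space \<Rightarrow> real"
    and Sset :: "(real^'n) set" and s0 :: "real^'n"
    and N :: nat and Smin S0 :: real and \<gamma> :: "nat \<Rightarrow> real"
    and pi :: "nat \<Rightarrow> nat \<Rightarrow> real^'n \<Rightarrow> 'u"
  assumes rho_meas: "(\<lambda>(s', s, u). rho s' s u) \<in> borel_measurable (borel \<Otimes>\<^sub>M borel \<Otimes>\<^sub>M borel)"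
    and rho_nonneg: "\<And>s' s u. 0 \<le> rho s' s u"
    and rho_prob: "\<And>s u. (\<integral>\<^sup>+ s'. ennreal (rho s' s u) \<partial>lborel) = 1"
    and pi_meas: "\<And>k j. pi k j \<in> borel_measurable borel"
    and S_meas: "Sset \<in> sets lborel"
    and s0_in: "s0 \<in> Sset"
    and Smin: "0 \<le> Smin" "Smin \<le> 1"
    and gamma: "\<And>k. k \<in> {1..<N} \<Longrightarrow> 0 < \<gamma> k \<and> \<gamma> k \<le> 1"
    and init: "rmwps rho Sset N (pi 0) 0 s0 \<ge> ennreal S0" "S0 \<ge> Smin"
    and recur: "\<And>k s. k \<in> {1..<N} \<Longrightarrow> s \<in> Sset \<Longrightarrow>
       rmwps rho Sset N (pi k) k s \<ge> ennreal (\<gamma> k) * rmwps rho Sset N (pi (k - 1)) k s"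
  shows "rmwps rho Sset N (\<lambda>j. pi j j) 0 s0 \<ge> ennreal ((\<Prod>k=1..<N. \<gamma> k) * S0)"
proof -
  have gamma_nonneg: "\<And>k. k \<in> {1..<N} \<Longrightarrow> 0 \<le> \<gamma> k"
    using gamma by (simp add: less_imp_le)
  then have "0 \<le> (\<Prod>k=1..<N. \<gamma> k)"
    by (intro prod_nonneg) simp
  then have "ennreal ((\<Prod>k=1..<N. \<gamma> k) * S0) = ennreal (\<Prod>k=1..<N. \<gamma> k) * ennreal S0"
    by (rule ennreal_mult')
  also have "\<dots> \<le> ennreal (\<Prod>k=1..<N. \<gamma> k) * rmwps rho Sset N (pi 0) 0 s0"
    using init(1) by (rule mult_left_mono) simp
  also have "\<dots> \<le> rmwps rho Sset N (\<lambda>j. pi j j) 0 s0"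
    using rmwps_closed_loop_ge[of 0 N s0 Sset \<gamma> rho pi] s0_in gamma_nonneg recur
    by simp
  finally show ?thesis .
qed

end
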